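(* Consider the two-well model with stochastically perturbed dynamics described in the context, with $H^{\varepsilon,\delta}(0)=H_0>H(O)$, and fix $T<\infty$. Within each edge of $\Gamma$, for $0<t<T$, the process $\widehat H^{\varepsilon,\delta}(t)$ converges in probability, as $\varepsilon,\delta\downarrow0$, to the deterministic motion $H(t)$ defined by $$H(t)=\Big(\frac{t}{\sqrt2}\frac{c_1+c_2}{a_1+a_2}+H_0^{-1/2}\Big)^{-2}\ \text{on } I_3,\quad H(t)=\Big(\frac{t-t_0}{\sqrt2}\frac{c_1+c_3}{a_1}+H(O)^{-1/2}\Big)^{-2}\ \text{on } I_1,\quad H(t)=\Big(\frac{t-t_0}{\sqrt2}\frac{c_2+c_3}{a_2}+H(O)^{-1/2}\Big)^{-2}\ \text{on } I_2,$$ where $t_0=\frac{\sqrt2(a_1+a_2)(H(O)^{-1/2}-H_0^{-1/2})}{c_1+c_2}$.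
   Context: Fix $a_1,a_2>0$, $H(O)>0$, and positive constants $c_1,c_2,c_3$. Phase space $\sqcap=\{(q,p):-a_1\le q\le a_2\}$, energy $H=p^2/2$. A unit-mass particle moves freely; with energy $>H(O)$ it moves in $[-a_1,a_2]$ reflecting at $q=-a_1$ and $q=a_2$; with energy $\le H(O)$ it is confined to the well $\mathcal E_1=[-a_1,0]$ or $\mathcal E_2=[0,a_2]$ in which it is, reflecting at both ends. Let $\{\xi_k\},\{\eta_k\},\{\zeta_k\}$ be independent sequences of i.i.d. random variables with continuous densities, with $P\{\alpha<\xi_k<\beta\}=P\{\alpha<\eta_k<\beta\}=P\{\alpha<\zeta_k<\beta\}=1$ for some $0<\alpha<\beta<\infty$. For $0<\varepsilon\ll1$, $0<\delta\ll1$: at the $k$-th collision with $q=-a_1$ the speed is multiplied by $1-\varepsilon c_1-\varepsilon\delta\eta_k$; at the $k$-th collision with $q=a_2$ by $1-\varepsilon c_2-\varepsilon\delta\xi_k$; at the $k$-th collision with the interior wall $q=0$ by $1-\varepsilon c_3-\varepsilon\delta\zeta_k$. The resulting process is $X^{\varepsilon,\delta}_t$; $\widetilde X^{\varepsilon,\delta}_t=X^{\varepsilon,\delta}_{t/\varepsilon}$; $H^{\varepsilon,\delta}(t)=H(\widetilde X^{\varepsilon,\delta}_t)$, a right-continuous step function, and $\widehat H^{\varepsilon,\delta}(t)$ is the continuous piecewise linear function obtained by connecting neighboring discontinuity points of its graph by straight line segments. The graph $\Gamma$ has interior vertex $O$ at energy $H(O)$ and edges $I_3$ (energy $>H(O)$),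 $I_1$ (energy $<H(O)$ in $\mathcal E_1$), $I_2$ (energy $<H(O)$ in $\mathcal E_2$). *)

theory Defs
  imports "HOL-Probability.Probability"
begin

text \<open>Deterministic two-well billiard driven by given multiplier sequences.
 Model parameters: a1 a2 (well sizes), HO = H(O), c1 c2 c3, eps, del,
 sequences eta (wall q=-a1), xi (wall q=a2), zeta (interior wall q=0).
 A collision state is (tau, q, p, k1, k2, k3): time of the collision,
 position, momentum right after it, and the numbers of collisions so far
 with q=-a1, q=a2, q=0 respectively.\<close>

definition next_wall :: "real \<Rightarrow> real \<Rightarrow> real \<Rightarrow> real \<Rightarrow> real \<Rightarrow> real" where
  "next_wall a1 a2 HO q p =
     (if p > 0 then (if p\<^sup>2 / 2 > HO \<or> q \<ge> 0 then a2 else 0)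
      else (if p\<^sup>2 / 2 > HO \<or> q \<le> 0 then - a1 else 0))"

definition coll_step ::
  "real \<Rightarrow> real \<Rightarrow> real \<Rightarrow> real \<Rightarrow> real \<Rightarrow> real \<Rightarrow> real \<Rightarrow> real \<Rightarrow>
   (nat \<Rightarrow> real) \<Rightarrow> (nat \<Rightarrow> real) \<Rightarrow> (nat \<Rightarrow> real) \<Rightarrow>
   real \<times> real \<times> real \<times> nat \<times> nat \<times> nat \<Rightarrow> real \<times> real \<times> real \<times> nat \<times> nat \<times> nat" where
  "coll_step a1 a2 HO c1 c2 c3 eps del eta xi zeta s =
     (case s of (tau, q, p, k1, k2, k3) \<Rightarrow>
       (let w = next_wall a1 a2 HO q p; tau' = tau + \<bar>w - q\<bar> / \<bar>p\<bar> in
        if w = - a1 then (tau', w, - p * (1 - eps * c1 - eps * del * eta k1), Suc k1, k2, k3)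
        else if w = a2 then (tau', w, - p * (1 - eps * c2 - eps * del * xi k2), k1, Suc k2, k3)
        else (tau', w, - p * (1 - eps * c3 - eps * del * zeta k3), k1, k2, Suc k3)))"

definition coll ::
  "real \<Rightarrow> real \<Rightarrow> real \<Rightarrow> real \<Rightarrow> real \<Rightarrow> real \<Rightarrow> real \<Rightarrow> real \<Rightarrow>
   (nat \<Rightarrow> real) \<Rightarrow> (nat \<Rightarrow> real) \<Rightarrow> (nat \<Rightarrow> real) \<Rightarrow> real \<Rightarrow> real \<Rightarrow>
   nat \<Rightarrow> real \<times> real \<times> real \<times> nat \<times> nat \<times> nat" where
  "coll a1 a2 HO c1 c2 c3 eps del eta xi zeta q0 p0 n =
     (coll_step a1 a2 HO c1 c2 c3 eps del eta xi zeta ^^ n) (0, q0, p0, 0, 0, 0)"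

definition ctime :: "real \<times> real \<times> real \<times> nat \<times> nat \<times> nat \<Rightarrow> real" where
  "ctime s = fst s"
definition cpos :: "real \<times> real \<times> real \<times> nat \<times> nat \<times> nat \<Rightarrow> real" where
  "cpos s = fst (snd s)"
definition cmom :: "real \<times> real \<times> real \<times> nat \<times> nat \<times> nat \<Rightarrow> real" where
  "cmom s = fst (snd (snd s))"
definition cenergy :: "real \<times> real \<times> real \<times> nat \<times> nat \<times> nat \<Rightarrow> real" where
  "cenergy s = (cmom s)\<^sup>2 / 2"

definition cedge :: "real \<Rightarrow> (real \<times> real \<times> real \<times> nat \<times> nat \<times> nat) \<Rightarrow> nat" where
  "cedge HO s = (if cenergy s > HO then 3
                 else if cpos s < 0 \<or> (cpos s = 0 \<and> cmom s < 0) then 1 else 2)"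

definition cidx ::
  "real \<Rightarrow> real \<Rightarrow> real \<Rightarrow> real \<Rightarrow> real \<Rightarrow> real \<Rightarrow> real \<Rightarrow> real \<Rightarrow>
   (nat \<Rightarrow> real) \<Rightarrow> (nat \<Rightarrow> real) \<Rightarrow> (nat \<Rightarrow> real) \<Rightarrow> real \<Rightarrow> real \<Rightarrow> real \<Rightarrow> nat" where
  "cidx a1 a2 HO c1 c2 c3 eps del eta xi zeta q0 p0 u =
     (LEAST n. u < ctime (coll a1 a2 HO c1 c2 c3 eps del eta xi zeta q0 p0 (Suc n)))"

definition edge_at ::
  "real \<Rightarrow> real \<Rightarrow> real \<Rightarrow> real \<Rightarrow> real \<Rightarrow> real \<Rightarrow> real \<Rightarrow> real \<Rightarrow>
   (nat \<Rightarrow> real) \<Rightarrow> (nat \<Rightarrow> real) \<Rightarrow> (nat \<Rightarrow> real) \<Rightarrow> real \<Rightarrow> real \<Rightarrow> real \<Rightarrow> nat" where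
  "edge_at a1 a2 HO c1 c2 c3 eps del eta xi zeta q0 p0 t =
     cedge HO (coll a1 a2 HO c1 c2 c3 eps del eta xi zeta q0 p0
                 (cidx a1 a2 HO c1 c2 c3 eps del eta xi zeta q0 p0 (t / eps)))"

text \<open>The piecewise linear interpolation \<open>\<hat>H\<close> at slow time t of the step function
  H(X_{t/eps}), through the points (eps*tau_n, energy after n-th collision).\<close>
definition Hhat ::
  "real \<Rightarrow> real \<Rightarrow> real \<Rightarrow> real \<Rightarrow> real \<Rightarrow> real \<Rightarrow> real \<Rightarrow> real \<Rightarrow>
   (nat \<Rightarrow> real) \<Rightarrow> (nat \<Rightarrow> real) \<Rightarrow> (nat \<Rightarrow> real) \<Rightarrow> real \<Rightarrow> real \<Rightarrow> real \<Rightarrow> real" where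
  "Hhat a1 a2 HO c1 c2 c3 eps del eta xi zeta q0 p0 t =
     (let S = coll a1 a2 HO c1 c2 c3 eps del eta xi zeta q0 p0;
          u = t / eps;
          n = cidx a1 a2 HO c1 c2 c3 eps del eta xi zeta q0 p0 u
      in cenergy (S n) + (cenergy (S (Suc n)) - cenergy (S n)) *
           ((u - ctime (S n)) / (ctime (S (Suc n)) - ctime (S n))))"

definition t0_time :: "real \<Rightarrow> real \<Rightarrow> real \<Rightarrow> real \<Rightarrow> real \<Rightarrow> real \<Rightarrow> real" where
  "t0_time a1 a2 c1 c2 HO H0 = sqrt 2 * (a1 + a2) * (1 / sqrt HO - 1 / sqrt H0) / (c1 + c2)"

definition Hlim3 :: "real \<Rightarrow> real \<Rightarrow> real \<Rightarrow> real \<Rightarrow> real \<Rightarrow> real \<Rightarrow> real" where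
  "Hlim3 a1 a2 c1 c2 H0 t = 1 / (t / sqrt 2 * ((c1 + c2) / (a1 + a2)) + 1 / sqrt H0)\<^sup>2"

definition Hlim1 :: "real \<Rightarrow> real \<Rightarrow> real \<Rightarrow> real \<Rightarrow> real \<Rightarrow> real \<Rightarrow> real" where
  "Hlim1 a1 c1 c3 HO t0 t = 1 / ((t - t0) / sqrt 2 * ((c1 + c3) / a1) + 1 / sqrt HO)\<^sup>2"

definition Hlim2 :: "real \<Rightarrow> real \<Rightarrow> real \<Rightarrow> real \<Rightarrow> real \<Rightarrow> real \<Rightarrow> real" where
  "Hlim2 a2 c2 c3 HO t0 t = 1 / ((t - t0) / sqrt 2 * ((c2 + c3) / a2) + 1 / sqrt HO)\<^sup>2"

end

theory Submission
  imports Defs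
begin

text \<open>
  Follow the inverse speed \<open>w = 1/|p|\<close> from collision to collision. A collision with a
  wall of coefficient \<open>c\<close> multiplies \<open>w\<close> by \<open>1/(1 - \<epsilon>(c + O(\<delta>)))\<close>, so \<open>w\<close> gains
  \<open>\<epsilon> w (c + O(\<epsilon> + \<delta>))\<close>, while the following flight across a distance \<open>L\<close> lasts
  \<open>L w\<close>. In slow time \<open>w\<close> therefore grows with slope \<open>c / L\<close>; as the walls hit
  alternate, the deviations of \<open>c\<close> from the mean \<open>(c\<^sub>i + c\<^sub>j)/2\<close> cancel in pairs, and
  \<open>w\<close> follows the straight line of slope \<open>(c\<^sub>i + c\<^sub>j)/(2L)\<close> up to \<open>O(\<epsilon> + \<delta>)\<close>.
  Since \<open>H = 1/(2w\<^sup>2)\<close>, this is the limit motion: on \<open>I\<^sub>3\<close> the particle bounces between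
  the outer walls until \<open>w\<close> reaches \<open>1/\<surd>(2H(O))\<close>, which happens at slow time
  \<open>t\<^sub>0 + O(\<epsilon> + \<delta>)\<close>, and from then on it bounces inside the well it occupies.

  All estimates are uniform over noise realisations with values in \<open>[0, \<beta>]\<close>. The
  exceptional event is therefore the null set on which the noise leaves \<open>(\<alpha>, \<beta>)\<close>.
\<close>

section \<open>Discrete averaging\<close>

lemma alternating_growth_estimate:
  fixes w tau s r :: "nat \<Rightarrow> real" and L k e R D cb :: real
  assumes L: "L > 0" and e: "e \<ge> 0" and cb: "cb = k * L" and "cb \<ge> 0"
    and tau_step: "\<And>j. N0 \<le> j \<Longrightarrow> j < n \<Longrightarrow> tau (Suc j) = tau j + L * w j"
    and w_step: "\<And>j. N0 \<le> j \<Longrightarrow> j < n \<Longrightarrow> w (Suc j) = w j + e * w j * (cb + s j + r j)"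
    and r_bound: "\<And>j. N0 \<le> j \<Longrightarrow> j < n \<Longrightarrow> \<bar>r j\<bar> \<le> R"
    and s_alt: "\<And>j. s (Suc j) = - s j"
    and s_bound: "\<And>j. \<bar>s j\<bar> \<le> D"
    and w_nonneg: "\<And>j. N0 \<le> j \<Longrightarrow> j \<le> n \<Longrightarrow> w j \<ge> 0"
    and "N0 \<le> n"
  shows "\<bar>w n - w N0 - e * k * (tau n - tau N0)\<bar>
          \<le> e * (R + e * D * (cb + D + R) / 2) / L * (tau n - tau N0) + e * D * (w n + w N0) / 2"
proof -
  define rho where "rho = R + e * D * (cb + D + R) / 2"
  \<comment> \<open>The corrector \<open>e s w / 2\<close> cancels the alternating part of the increments
    to first order.\<close>
  define V where "V j = w j - e * k * tau j + e * s j * w j / 2" for j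
  have V_step: "\<bar>V (Suc j) - V j\<bar> \<le> e * rho / L * (tau (Suc j) - tau j)"
    if j: "N0 \<le> j" "j < n" for j
  proof -
    have ts: "tau (Suc j) = tau j + L * w j" using tau_step j by blast
    have "V (Suc j) - V j = e * w j * (r j - e * s j * (cb + s j + r j) / 2)"
      unfolding V_def w_step[OF j] ts cb s_alt by (simp add: field_simps)
    moreover have "\<bar>r j - e * s j * (cb + s j + r j) / 2\<bar> \<le> rho"
    proof -
      have "\<bar>e * s j * (cb + s j + r j)\<bar> \<le> e * D * (cb + D + R)"
        unfolding abs_mult using e s_bound[of j] r_bound[OF j] \<open>cb \<ge> 0\<close>
        by (intro mult_mono) auto
      then show ?thesis unfolding rho_def using r_bound[OF j] by (simp add: abs_le_iff)
    qed
    ultimately have "\<bar>V (Suc j) - V j\<bar> \<le> e * w j * rho"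
      using e w_nonneg[of j] j by (simp add: abs_mult mult_left_mono)
    also have "e * w j * rho = e * rho / L * (tau (Suc j) - tau j)"
      using ts L by (simp add: field_simps)
    finally show ?thesis .
  qed
  have V_total: "\<bar>V (N0 + m) - V N0\<bar> \<le> e * rho / L * (tau (N0 + m) - tau N0)"
    if "N0 + m \<le> n" for m
    using that
  proof (induction m)
    case (Suc m)
    have "\<bar>V (N0 + Suc m) - V N0\<bar> \<le> \<bar>V (Suc (N0 + m)) - V (N0 + m)\<bar> + \<bar>V (N0 + m) - V N0\<bar>"
      by simp
    also have "\<dots> \<le> e * rho / L * (tau (Suc (N0 + m)) - tau (N0 + m))
                    + e * rho / L * (tau (N0 + m) - tau N0)"
      using Suc V_step[of "N0 + m"] by (intro add_mono) auto
    finally show ?case by (simp add: algebra_simps)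
  qed simp
  obtain m where m: "n = N0 + m" using \<open>N0 \<le> n\<close> le_Suc_ex by blast
  have corrector: "\<bar>e * s j * w j / 2\<bar> \<le> e * D * w j / 2" if "N0 \<le> j" "j \<le> n" for j
    unfolding abs_mult abs_divide
    using e w_nonneg[OF that] s_bound[of j] by (simp add: mult_right_mono mult_left_mono)
  show ?thesis
    using V_total[of m] corrector[of n] corrector[of N0] \<open>N0 \<le> n\<close>
    unfolding m[symmetric] V_def rho_def[symmetric]
    by (simp add: abs_le_iff algebra_simps add_divide_distrib)
qed

lemma periodic_growth_estimate:
  fixes w tau c r :: "nat \<Rightarrow> real" and L k e R D cb :: real
  assumes L: "L > 0" and e: "e \<ge> 0" and cb: "cb = k * L" and cbp: "cb \<ge> 0"
    and tau_step: "\<And>j. N0 \<le> j \<Longrightarrow> j < n \<Longrightarrow> tau (Suc j) = tau j + L * w j"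
    and w_step: "\<And>j. N0 \<le> j \<Longrightarrow> j < n \<Longrightarrow> w (Suc j) = w j + e * w j * (c j + r j)"
    and r_bound: "\<And>j. N0 \<le> j \<Longrightarrow> j < n \<Longrightarrow> \<bar>r j\<bar> \<le> R"
    and c_alt: "\<And>j. N0 \<le> j \<Longrightarrow> Suc j < n \<Longrightarrow> c (Suc j) = 2 * cb - c j"
    and c_start: "N0 < n \<Longrightarrow> \<bar>c N0 - cb\<bar> \<le> D" and "D \<ge> 0"
    and w_nonneg: "\<And>j. N0 \<le> j \<Longrightarrow> j \<le> n \<Longrightarrow> w j \<ge> 0"
    and "N0 \<le> n"
  shows "\<bar>w n - w N0 - e * k * (tau n - tau N0)\<bar>
          \<le> e * (R + e * D * (cb + D + R) / 2) / L * (tau n - tau N0) + e * D * (w n + w N0) / 2"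
proof (cases "N0 = n")
  case True
  then show ?thesis using e \<open>D \<ge> 0\<close> w_nonneg[of n] by simp
next
  case False
  with \<open>N0 \<le> n\<close> have "N0 < n" by simp
  define s where "s j = (-1) ^ (j + N0) * (c N0 - cb)" for j
  have s_alt: "s (Suc j) = - s j" for j by (simp add: s_def)
  have s_bound: "\<bar>s j\<bar> \<le> D" for j
    using c_start[OF \<open>N0 < n\<close>] by (simp add: s_def abs_mult power_abs)
  have c_eq: "c (N0 + m) = cb + s (N0 + m)" if "N0 + m < n" for m
    using that
  proof (induction m)
    case 0
    have "s N0 = c N0 - cb" by (simp add: s_def flip: mult_2)
    then show ?case by simp
  next
    case (Suc m)
    then show ?case using c_alt[of "N0 + m"] s_alt[of "N0 + m"] by simp
  qed
  have "w (Suc j) = w j + e * w j * (cb + s j + r j)" if j: "N0 \<le> j" "j < n" for j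
  proof -
    obtain m where "j = N0 + m" using le_Suc_ex[OF j(1)] by blast
    then show ?thesis using c_eq[of m] w_step[OF j] j by (simp add: add.assoc)
  qed
  then show ?thesis
    using alternating_growth_estimate[of L e cb k N0 n tau w s r R D, OF L e cb cbp tau_step _
        r_bound s_alt s_bound w_nonneg \<open>N0 \<le> n\<close>] by blast
qed

lemma convex_combination_dist_le:
  fixes a b h th :: real
  assumes "0 \<le> th" "th \<le> 1" "\<bar>a - h\<bar> \<le> e" "\<bar>b - h\<bar> \<le> e"
  shows "\<bar>a + (b - a) * th - h\<bar> \<le> e"
proof -
  have "a + (b - a) * th - h = (1 - th) * (a - h) + th * (b - h)" by (simp add: algebra_simps)
  also have "\<bar>\<dots>\<bar> \<le> (1 - th) * \<bar>a - h\<bar> + th * \<bar>b - h\<bar>"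
    using assms by (simp add: abs_mult order_trans[OF abs_triangle_ineq])
  also have "\<dots> \<le> (1 - th) * e + th * e"
    using assms by (intro add_mono mult_left_mono) auto
  finally show ?thesis by (simp add: algebra_simps)
qed

lemma inverse_square_diff_le:
  fixes a b w :: real
  assumes w: "w > 0" and a: "a \<ge> w" and b: "b \<ge> w"
  shows "\<bar>1 / (2 * a\<^sup>2) - 1 / (2 * b\<^sup>2)\<bar> \<le> \<bar>a - b\<bar> / w ^ 3"
proof -
  have ap: "a > 0" and bp: "b > 0" using w a b by auto
  define f where "f = 1 / (2 * a * b\<^sup>2) + 1 / (2 * a\<^sup>2 * b)"
  have "w ^ 3 \<le> a * b\<^sup>2" "w ^ 3 \<le> a\<^sup>2 * b"
    unfolding power3_eq_cube power2_eq_square using w a b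
    by (simp_all add: mult_mono mult.assoc)
  then have "1 / (2 * a * b\<^sup>2) \<le> 1 / (2 * w ^ 3)" "1 / (2 * a\<^sup>2 * b) \<le> 1 / (2 * w ^ 3)"
    using w ap bp by (simp_all add: frac_le)
  then have f_le: "f \<le> 1 / w ^ 3" by (simp add: f_def)
  have "1 / (2 * a\<^sup>2) - 1 / (2 * b\<^sup>2) = (b - a) * f"
    using ap bp by (simp add: f_def field_simps power2_eq_square)
  moreover have "f \<ge> 0" using ap bp by (simp add: f_def)
  ultimately have "\<bar>1 / (2 * a\<^sup>2) - 1 / (2 * b\<^sup>2)\<bar> = \<bar>b - a\<bar> * f"
    by (simp add: abs_mult)
  also have "\<dots> \<le> \<bar>b - a\<bar> * (1 / w ^ 3)" by (rule mult_left_mono[OF f_le]) simp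
  finally show ?thesis by (simp add: abs_minus_commute)
qed

lemma sqrt_half_sq_inverse: "1 / sqrt ((x::real)\<^sup>2 / 2) = sqrt 2 * (1 / \<bar>x\<bar>)"
  by (simp add: real_sqrt_divide)

lemma limit_motion_eq:
  fixes x c L w0 :: real
  assumes "L > 0"
  shows "1 / (x / sqrt 2 * (c / L) + sqrt 2 * w0)\<^sup>2 = 1 / (2 * (w0 + c / (2 * L) * x)\<^sup>2)"
proof -
  have "x / sqrt 2 * (c / L) + sqrt 2 * w0 = sqrt 2 * (w0 + c / (2 * L) * x)"
    using assms by (simp add: field_simps)
  then show ?thesis by (simp add: power_mult_distrib)
qed

section \<open>Constants of the limit motion\<close>

locale billiard_params =
  fixes a1 a2 HO c1 c2 c3 B p0 :: real
  assumes a1: "a1 > 0" and a2: "a2 > 0" and HO: "HO > 0"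
    and c1: "c1 > 0" and c2: "c2 > 0" and c3: "c3 > 0" and B: "B \<ge> 0"
    and p0: "p0\<^sup>2 / 2 > HO"
begin

definition "c_max = c1 + c2 + c3 + B"
definition "L_min = min a1 a2"
definition "k_max = c_max / L_min"
definition "w_init = 1 / \<bar>p0\<bar>"
definition "w_crit = 1 / sqrt (2 * HO)"
definition "k_outer = (c1 + c2) / (2 * (a1 + a2))"
definition "t_crit = (w_crit - w_init) / k_outer"

text \<open>The error bounds below, divided by \<open>\<epsilon> + \<delta>\<close>, depend only on the parameters and the
  time horizon \<open>T\<close>, not on the noise: this is what makes the convergence uniform.\<close>
definition "rho_max = 2 * B + 2 * c_max\<^sup>2 + c_max * (3 * c_max + 2 * B) / 2"
definition "w_max T = 2 * w_init + 2 * k_max * T"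
definition "err_phase T = rho_max * T / L_min + c_max * w_max T"
definition "err_outer T = err_phase T + 2 * c_max * w_init + k_max * (a1 + a2) * w_init"
definition "err_well T =
  err_phase T + 2 * c_max * w_crit + k_max * (err_outer T + 2 * c_max * w_crit) / k_outer"
definition "err_total T =
  err_outer T + err_well T + 2 * c_max * w_crit + (2 * c_max + k_max * (a1 + a2)) * w_max T"

lemma c_max_pos: "c_max > 0" using c1 c2 c3 B by (simp add: c_max_def)
lemma L_min_pos: "L_min > 0" using a1 a2 by (simp add: L_min_def)
lemma k_max_pos: "k_max > 0" using c_max_pos L_min_pos by (simp add: k_max_def)
lemma w_init_pos: "w_init > 0" using p0 HO by (auto simp: w_init_def)
lemma w_crit_pos: "w_crit > 0" using HO by (simp add: w_crit_def)
lemma k_outer_pos: "k_outer > 0" using a1 a2 c1 c2 by (simp add: k_outer_def)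

lemma w_init_lt_crit: "w_init < w_crit"
proof -
  have "sqrt (2 * HO) < sqrt (p0\<^sup>2)" using p0 by (simp del: real_sqrt_abs)
  then have "sqrt (2 * HO) < \<bar>p0\<bar>" by simp
  then show ?thesis using HO by (simp add: w_init_def w_crit_def frac_less2)
qed

lemma rate_le_k_max:
  assumes "0 \<le> cb" "cb \<le> c_max" "L_min \<le> L"
  shows "cb / L \<le> k_max"
  unfolding k_max_def using assms L_min_pos by (intro frac_le) auto

lemma k_outer_le_k_max: "k_outer \<le> k_max"
proof -
  have "(c1 + c2) / 2 / (a1 + a2) \<le> k_max"
    using c1 c2 c3 B a1 a2 by (intro rate_le_k_max) (auto simp: c_max_def L_min_def)
  then show ?thesis by (simp add: k_outer_def)
qed

lemma w_max_nonneg: "0 \<le> T \<Longrightarrow> 0 \<le> w_max T"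
  using w_init_pos k_max_pos by (simp add: w_max_def)

lemma err_outer_nonneg: "0 \<le> T \<Longrightarrow> 0 \<le> err_outer T"
  using w_max_nonneg[of T] c_max_pos L_min_pos k_max_pos w_init_pos a1 a2 B
  by (simp add: err_outer_def err_phase_def rho_max_def)

lemma err_well_nonneg: "0 \<le> T \<Longrightarrow> 0 \<le> err_well T"
  using err_outer_nonneg[of T] w_max_nonneg[of T] c_max_pos L_min_pos k_max_pos k_outer_pos
    w_crit_pos B
  by (simp add: err_well_def err_phase_def rho_max_def)

lemma err_total_ge:
  assumes "0 \<le> T"
  shows "err_outer T + (2 * c_max + k_max * (a1 + a2)) * w_max T \<le> err_total T"
    and "err_well T + (2 * c_max + k_max * (a1 + a2)) * w_max T \<le> err_total T"
    and "err_outer T + 2 * c_max * w_crit \<le> err_total T"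
  using err_outer_nonneg[OF assms] err_well_nonneg[OF assms] w_max_nonneg[OF assms]
    c_max_pos w_crit_pos k_max_pos a1 a2
  by (simp_all add: err_total_def)

lemma sqrt_HO: "1 / sqrt HO = sqrt 2 * w_crit"
  using HO by (simp add: w_crit_def real_sqrt_mult)

lemma t0_time_eq: "t0_time a1 a2 c1 c2 HO (p0\<^sup>2 / 2) = t_crit"
proof -
  have "t0_time a1 a2 c1 c2 HO (p0\<^sup>2 / 2)
      = sqrt 2 * sqrt 2 * (a1 + a2) * (w_crit - w_init) / (c1 + c2)"
    by (simp add: t0_time_def sqrt_HO sqrt_half_sq_inverse w_init_def algebra_simps)
  also have "\<dots> = t_crit"
    using a1 a2 c1 c2 by (simp add: t_crit_def k_outer_def field_simps)
  finally show ?thesis .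
qed

lemma Hlim3_eq: "Hlim3 a1 a2 c1 c2 (p0\<^sup>2 / 2) t = 1 / (2 * (w_init + k_outer * t)\<^sup>2)"
  using limit_motion_eq[of "a1 + a2" t "c1 + c2" w_init] a1 a2
  by (simp add: Hlim3_def sqrt_half_sq_inverse w_init_def k_outer_def)

lemma w_crit_sq: "1 / (2 * w_crit\<^sup>2) = HO"
  using HO by (simp add: w_crit_def power_divide)

lemma Hlim1_eq:
  "Hlim1 a1 c1 c3 HO t_crit t = 1 / (2 * (w_crit + (c1 + c3) / (2 * a1) * (t - t_crit))\<^sup>2)"
  using limit_motion_eq[of a1 "t - t_crit" "c1 + c3" w_crit] a1
  by (simp add: Hlim1_def sqrt_HO)

lemma Hlim2_eq:
  "Hlim2 a2 c2 c3 HO t_crit t = 1 / (2 * (w_crit + (c2 + c3) / (2 * a2) * (t - t_crit))\<^sup>2)"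
  using limit_motion_eq[of a2 "t - t_crit" "c2 + c3" w_crit] a2
  by (simp add: Hlim2_def sqrt_HO)

end

section \<open>Collision dynamics\<close>

definition near_limit_motion ::
  "real \<Rightarrow> real \<Rightarrow> real \<Rightarrow> real \<Rightarrow> real \<Rightarrow> real \<Rightarrow> real \<Rightarrow> real \<Rightarrow> real \<Rightarrow>
   (nat \<Rightarrow> real) \<Rightarrow> (nat \<Rightarrow> real) \<Rightarrow> (nat \<Rightarrow> real) \<Rightarrow> real \<Rightarrow> real \<Rightarrow> real \<Rightarrow> real \<Rightarrow> bool" where
  "near_limit_motion a1 a2 HO H0 c1 c2 c3 eps del eta xi zeta q0 p0 t kap \<longleftrightarrow>
     (let t0 = t0_time a1 a2 c1 c2 HO H0;
          Hh = Hhat a1 a2 HO c1 c2 c3 eps del eta xi zeta q0 p0 t;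
          ed = edge_at a1 a2 HO c1 c2 c3 eps del eta xi zeta q0 p0 t
      in (t < t0 \<longrightarrow> ed = 3 \<and> \<bar>Hh - Hlim3 a1 a2 c1 c2 H0 t\<bar> \<le> kap) \<and>
         (t = t0 \<longrightarrow> \<bar>Hh - HO\<bar> \<le> kap) \<and>
         (t0 < t \<longrightarrow> (ed = 1 \<and> \<bar>Hh - Hlim1 a1 c1 c3 HO t0 t\<bar> \<le> kap) \<or>
                     (ed = 2 \<and> \<bar>Hh - Hlim2 a2 c2 c3 HO t0 t\<bar> \<le> kap)))"

locale billiard = billiard_params +
  fixes eps del :: real and eta xi zeta :: "nat \<Rightarrow> real" and q0 :: real
  assumes eps: "eps > 0" and del: "del > 0" and del_le_1: "del \<le> 1"
    and eta: "\<And>k. 0 \<le> eta k \<and> eta k \<le> B"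
    and xi: "\<And>k. 0 \<le> xi k \<and> xi k \<le> B"
    and zeta: "\<And>k. 0 \<le> zeta k \<and> zeta k \<le> B"
    and eps_small: "eps * (c1 + c2 + c3 + B) \<le> 1 / 2"
    and q0: "-a1 \<le> q0" "q0 \<le> a2"
begin

definition "S = coll a1 a2 HO c1 c2 c3 eps del eta xi zeta q0 p0"
definition "tau n = ctime (S n)"
definition "q n = cpos (S n)"
definition "p n = cmom (S n)"
definition "w n = 1 / \<bar>p n\<bar>"
definition "wall_coeff x = (if x = -a1 then c1 else if x = a2 then c2 else c3)"

lemma S_0: "S 0 = (0, q0, p0, 0, 0, 0)" by (simp add: S_def coll_def)
lemma S_Suc: "S (Suc n) = coll_step a1 a2 HO c1 c2 c3 eps del eta xi zeta (S n)"
  by (simp add: S_def coll_def)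

lemma tau_0 [simp]: "tau 0 = 0" by (simp add: tau_def S_0 ctime_def)
lemma q_0 [simp]: "q 0 = q0" by (simp add: q_def S_0 cpos_def)
lemma p_0 [simp]: "p 0 = p0" by (simp add: p_def S_0 cmom_def)
lemma w_0 [simp]: "w 0 = w_init" by (simp add: w_def w_init_def)

lemma collision_step:
  obtains z where "0 \<le> z" "z \<le> B" "q (Suc n) = next_wall a1 a2 HO (q n) (p n)"
    "tau (Suc n) = tau n + \<bar>q (Suc n) - q n\<bar> / \<bar>p n\<bar>"
    "p (Suc n) = - p n * (1 - eps * (wall_coeff (q (Suc n)) + del * z))"
proof -
  obtain t0 q1 p1 n1 n2 n3 where Sn: "S n = (t0, q1, p1, n1, n2, n3)" by (cases "S n") auto
  define wl where "wl = next_wall a1 a2 HO q1 p1"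
  have ne: "a2 \<noteq> -a1" "(0::real) \<noteq> -a1" "(0::real) \<noteq> a2" using a1 a2 by auto
  note defs = S_Suc coll_step_def Let_def wl_def[symmetric] q_def tau_def p_def
    cpos_def ctime_def cmom_def wall_coeff_def algebra_simps
  consider "wl = -a1" | "wl = a2" | "wl \<noteq> -a1" "wl \<noteq> a2" by blast
  then show ?thesis
  proof cases
    case 1
    show ?thesis by (rule that[of "eta n1"]) (use 1 eta[of n1] Sn in \<open>auto simp: defs\<close>)
  next
    case 2
    show ?thesis by (rule that[of "xi n2"]) (use 2 xi[of n2] Sn ne in \<open>auto simp: defs\<close>)
  next
    case 3
    show ?thesis by (rule that[of "zeta n3"]) (use 3 zeta[of n3] Sn ne in \<open>auto simp: defs\<close>)
  qed
qed

lemma q_step: "q (Suc n) = next_wall a1 a2 HO (q n) (p n)"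
  by (rule collision_step) auto

lemma wall_coeff_pos: "wall_coeff x > 0"
  using c1 c2 c3 by (auto simp: wall_coeff_def)

lemma damping_coefficient:
  obtains g where "wall_coeff (q (Suc n)) \<le> g" "g \<le> wall_coeff (q (Suc n)) + del * B" "g \<le> c_max"
    "1 / 2 \<le> 1 - eps * g" "p (Suc n) = - p n * (1 - eps * g)"
proof -
  obtain z where z: "0 \<le> z" "z \<le> B"
    and p_Suc: "p (Suc n) = - p n * (1 - eps * (wall_coeff (q (Suc n)) + del * z))"
    by (rule collision_step)
  define g where "g = wall_coeff (q (Suc n)) + del * z"
  have "del * z \<le> del * B" using z del by (simp add: mult_left_mono)
  moreover have "del * B \<le> B" using del_le_1 B mult_right_mono[of del 1 B] by simp
  ultimately have g_le: "g \<le> c_max"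
    using c1 c2 c3 unfolding g_def c_max_def wall_coeff_def by auto
  then have "eps * g \<le> eps * c_max" using eps by (simp add: mult_left_mono)
  then have "1 / 2 \<le> 1 - eps * g" using eps_small unfolding c_max_def by linarith
  then show ?thesis
    using that[of g] z del g_le \<open>del * z \<le> del * B\<close> p_Suc by (simp add: g_def)
qed

lemma p_nonzero: "p n \<noteq> 0"
proof (induction n)
  case 0
  then show ?case using p0 HO by auto
next
  case (Suc n)
  obtain g where "1 / 2 \<le> 1 - eps * g" "p (Suc n) = - p n * (1 - eps * g)"
    by (rule damping_coefficient)
  then show ?case using Suc by auto
qed

lemma w_pos: "w n > 0" using p_nonzero by (simp add: w_def)

lemma p_sign_alternates: "p (Suc n) * p n < 0"
proof -
  obtain g where m: "1 / 2 \<le> 1 - eps * g" and p_Suc: "p (Suc n) = - p n * (1 - eps * g)"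
    by (rule damping_coefficient)
  have "p (Suc n) * p n = - ((p n)\<^sup>2 * (1 - eps * g))"
    by (simp add: p_Suc power2_eq_square)
  moreover have "(p n)\<^sup>2 * (1 - eps * g) > 0" using p_nonzero[of n] m by simp
  ultimately show ?thesis by simp
qed

lemma tau_step: "tau (Suc n) = tau n + \<bar>q (Suc n) - q n\<bar> * w n"
proof -
  obtain z where "tau (Suc n) = tau n + \<bar>q (Suc n) - q n\<bar> / \<bar>p n\<bar>" by (rule collision_step)
  then show ?thesis by (simp add: w_def)
qed

lemma energy_eq: "cenergy (S n) = 1 / (2 * (w n)\<^sup>2)"
  using p_nonzero[of n]
  by (simp add: cenergy_def w_def p_def power2_eq_square abs_mult_self_eq flip: abs_mult)

text \<open>The growth rate of \<open>w\<close> at a collision is the wall coefficient up to a remainder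
  of order \<open>\<delta> + \<epsilon>\<close>: the noise contributes \<open>\<delta>B\<close>, the nonlinearity of
  \<open>1/(1 - \<epsilon>g)\<close> contributes \<open>\<epsilon>c_max\<^sup>2\<close>.\<close>
definition "R = 2 * (del * B + eps * c_max\<^sup>2)"

lemma R_nonneg: "R \<ge> 0" using del B eps by (simp add: R_def)

definition "rem j = (w (Suc j) - w j) / (eps * w j) - wall_coeff (q (Suc j))"

lemma w_step: "w (Suc j) = w j + eps * w j * (wall_coeff (q (Suc j)) + rem j)"
  using eps w_pos[of j] by (simp add: rem_def field_simps)

lemma rem_bounds: "0 \<le> rem j" "rem j \<le> R"
proof -
  obtain g where g: "wall_coeff (q (Suc j)) \<le> g" "g \<le> wall_coeff (q (Suc j)) + del * B" "g \<le> c_max"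
    and m: "1 / 2 \<le> 1 - eps * g" and p_Suc: "p (Suc j) = - p j * (1 - eps * g)"
    by (rule damping_coefficient)
  define c where "c = wall_coeff (q (Suc j))"
  define m where "m = 1 - eps * g"
  have c: "0 < c" "c \<le> g" using wall_coeff_pos g(1) by (auto simp: c_def)
  have "w (Suc j) = w j / m" using p_Suc m by (simp add: w_def m_def abs_mult)
  then have rem_eq: "rem j = (g - c + eps * c * g) / m"
    using eps w_pos[of j] m by (simp add: rem_def c_def m_def field_simps)
  have num: "0 \<le> g - c + eps * c * g" "g - c + eps * c * g \<le> R / 2"
  proof -
    have "c * g \<le> c_max * c_max" using c g by (intro mult_mono) auto
    then have "eps * c * g \<le> eps * c_max\<^sup>2" using eps
      by (simp add: power2_eq_square mult.assoc mult_left_mono)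
    moreover have "0 \<le> eps * c * g" using c g eps by simp
    ultimately show "0 \<le> g - c + eps * c * g" "g - c + eps * c * g \<le> R / 2"
      using g c by (auto simp: R_def c_def)
  qed
  show "0 \<le> rem j" using num m by (simp add: rem_eq m_def)
  have "(g - c + eps * c * g) / m \<le> (R / 2) / (1 / 2)"
    using num m by (intro frac_le) (auto simp: m_def)
  then show "rem j \<le> R" by (simp add: rem_eq)
qed

lemma w_mono_step: "w n \<le> w (Suc n)"
  using w_step[of n] rem_bounds[of n] w_pos[of n] eps wall_coeff_pos[of "q (Suc n)"] by simp

lemma w_mono: "m \<le> n \<Longrightarrow> w m \<le> w n"
  using w_mono_step by (rule lift_Suc_mono_le)

lemma w_step_le: "w (Suc n) \<le> w n * (1 + 2 * eps * c_max)"
proof -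
  obtain g where g: "g \<le> c_max" and m: "1 / 2 \<le> 1 - eps * g"
    and p_Suc: "p (Suc n) = - p n * (1 - eps * g)"
    by (rule damping_coefficient)
  have w_Suc: "w (Suc n) = w n / (1 - eps * g)" using p_Suc m by (simp add: w_def abs_mult)
  have "1 \<le> (1 - eps * g) * (1 + 2 * eps * c_max)"
  proof -
    have "eps * g \<le> eps * c_max" using g eps by (simp add: mult_left_mono)
    moreover have "eps * c_max \<le> 2 * eps * c_max * (1 - eps * g)" using m eps c_max_pos by simp
    ultimately show ?thesis by (simp add: algebra_simps)
  qed
  then have "w n * 1 \<le> w n * ((1 + 2 * eps * c_max) * (1 - eps * g))"
    using w_pos[of n] by (intro mult_left_mono) (auto simp: mult.commute)
  then show ?thesis using m by (simp add: w_Suc pos_divide_le_eq mult.assoc)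
qed

lemma w_step_ge: "w (Suc n) \<ge> w n + eps * w n * min c1 (min c2 c3)"
proof -
  have "min c1 (min c2 c3) \<le> wall_coeff (q (Suc n)) + rem n"
    using rem_bounds[of n] by (auto simp: wall_coeff_def)
  then have "eps * w n * min c1 (min c2 c3) \<le> eps * w n * (wall_coeff (q (Suc n)) + rem n)"
    using w_pos[of n] eps by (intro mult_left_mono) auto
  then show ?thesis using w_step[of n] by simp
qed

lemma w_ge_linear: "w n \<ge> w_init + real n * (eps * w_init * min c1 (min c2 c3))"
proof (induction n)
  case (Suc n)
  have "eps * w_init * min c1 (min c2 c3) \<le> eps * w n * min c1 (min c2 c3)"
    using w_mono[of 0 n] eps c1 c2 c3 by (intro mult_right_mono mult_left_mono) auto
  then show ?case using Suc w_step_ge[of n] by (simp add: algebra_simps)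
qed simp

definition "high n \<longleftrightarrow> (p n)\<^sup>2 / 2 > HO"

lemma high_iff: "high n \<longleftrightarrow> w n < w_crit"
proof -
  have "high n \<longleftrightarrow> 2 * HO < (p n)\<^sup>2" unfolding high_def by linarith
  also have "\<dots> \<longleftrightarrow> sqrt (2 * HO) < \<bar>p n\<bar>"
    using HO by (metis real_sqrt_abs real_sqrt_less_iff)
  also have "\<dots> \<longleftrightarrow> 1 / \<bar>p n\<bar> < 1 / sqrt (2 * HO)"
    using HO p_nonzero[of n] by (simp add: field_simps)
  finally show ?thesis by (simp add: w_def w_crit_def)
qed

lemma high_0: "high 0" using p0 by (simp add: high_def)

lemma ex_not_high: "\<exists>n. \<not> high n"
proof -
  define d where "d = eps * w_init * min c1 (min c2 c3)"
  have "d > 0" using eps w_init_pos c1 c2 c3 by (simp add: d_def)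
  then obtain n :: nat where "w_crit < real n * d"
    using reals_Archimedean3 by blast
  then show ?thesis using w_ge_linear[of n] w_init_pos high_iff[of n] by (auto simp: d_def)
qed

definition "N = (LEAST n. \<not> high n)"

lemma high_iff_less_N: "high n \<longleftrightarrow> n < N"
proof
  assume "high n"
  show "n < N"
  proof (rule ccontr)
    assume "\<not> n < N"
    then have "w N \<le> w n" by (intro w_mono) simp
    moreover have "\<not> high N" unfolding N_def using ex_not_high by (rule LeastI_ex)
    ultimately show False using \<open>high n\<close> high_iff by auto
  qed
qed (auto simp: N_def dest: not_less_Least)

lemma N_pos: "N \<ge> 1"
  using high_0 high_iff_less_N by (cases N) auto

lemma outer_phase:
  assumes "1 \<le> n" "n \<le> N"
  shows "(q n = a2 \<and> p n < 0) \<or> (q n = -a1 \<and> p n > 0)"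
  using assms
proof (induction n)
  case (Suc n)
  have "(p n)\<^sup>2 / 2 > HO" using Suc.prems high_iff_less_N by (simp add: high_def)
  moreover have "n = 0 \<or> (q n = a2 \<and> p n < 0) \<or> (q n = -a1 \<and> p n > 0)" using Suc by auto
  ultimately show ?case using p_sign_alternates[of n] q_step[of n] p_nonzero[of 0]
    by (auto simp: next_wall_def mult_less_0_iff)
qed simp

lemma outer_step:
  assumes "1 \<le> n" "n < N"
  shows "q (Suc n) = (if q n = a2 then -a1 else a2)" "\<bar>q (Suc n) - q n\<bar> = a1 + a2"
proof -
  have i: "(q n = a2 \<and> p n < 0) \<or> (q n = -a1 \<and> p n > 0)" using outer_phase assms by simp
  have "(p n)\<^sup>2 / 2 > HO" using assms high_iff_less_N by (simp add: high_def)
  then show "q (Suc n) = (if q n = a2 then -a1 else a2)" using i q_step[of n] a1 a2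
    by (auto simp: next_wall_def)
  then show "\<bar>q (Suc n) - q n\<bar> = a1 + a2" using i a1 a2 by auto
qed

lemma first_flight: "\<bar>q 1 - q 0\<bar> \<le> a1 + a2"
proof -
  have "q 1 = a2 \<or> q 1 = -a1" using p0 q_step[of 0] by (auto simp: next_wall_def)
  then show ?thesis using q0 by auto
qed

definition "right_well \<longleftrightarrow> q N = a2"

lemma trapped_phase:
  assumes "N \<le> n"
  shows "if right_well then (q n = a2 \<and> p n < 0) \<or> (q n = 0 \<and> p n > 0)
         else (q n = -a1 \<and> p n > 0) \<or> (q n = 0 \<and> p n < 0)"
  using assms
proof (induction n)
  case 0
  then show ?case using N_pos by simp
next
  case (Suc n)
  show ?case
  proof (cases "N = Suc n")
    case True
    then show ?thesis using outer_phase[of N] N_pos a1 a2 by (auto simp: right_well_def)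
  next
    case False
    then have "\<not> (p n)\<^sup>2 / 2 > HO" using Suc.prems high_iff_less_N by (simp add: high_def)
    then show ?thesis using Suc False p_sign_alternates[of n] q_step[of n] a1 a2
      by (auto simp: next_wall_def mult_less_0_iff split: if_splits)
  qed
qed

lemma trapped_next_wall:
  assumes "N \<le> n"
  shows "q (Suc n) = (if right_well then (if q n = a2 then 0 else a2)
                      else (if q n = -a1 then 0 else -a1))"
proof -
  have "\<not> (p n)\<^sup>2 / 2 > HO" using assms high_iff_less_N by (simp add: high_def)
  then show ?thesis using trapped_phase[OF assms] q_step[of n] a1 a2
    by (auto simp: next_wall_def split: if_splits)
qed

definition "L_well = (if right_well then a2 else a1)"
definition "c_well = (if right_well then c2 + c3 else c1 + c3) / 2"
definition "k_well = c_well / L_well"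
definition "D_well = (if right_well then \<bar>c2 - c3\<bar> else \<bar>c1 - c3\<bar>) / 2"

lemma trapped_step:
  assumes "N \<le> n"
  shows "\<bar>q (Suc n) - q n\<bar> = L_well"
    and "wall_coeff (q (Suc (Suc n))) = 2 * c_well - wall_coeff (q (Suc n))"
    and "\<bar>wall_coeff (q (Suc n)) - c_well\<bar> = D_well"
proof -
  have next1: "q (Suc n) \<in> (if right_well then {a2, 0} else {-a1, 0})"
    using trapped_phase[of "Suc n"] assms by (auto split: if_splits)
  show "\<bar>q (Suc n) - q n\<bar> = L_well"
    using trapped_phase[OF assms] trapped_next_wall[OF assms] a1 a2
    by (auto simp: L_well_def split: if_splits)
  show "wall_coeff (q (Suc (Suc n))) = 2 * c_well - wall_coeff (q (Suc n))"
    using next1 trapped_next_wall[of "Suc n"] assms a1 a2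
    by (auto simp: wall_coeff_def c_well_def split: if_splits)
  have half_diff: "\<bar>x - (x + y) / 2\<bar> = \<bar>x - y\<bar> / 2" "\<bar>y - (x + y) / 2\<bar> = \<bar>x - y\<bar> / 2"
    for x y :: real
    by (auto simp: abs_if field_simps)
  show "\<bar>wall_coeff (q (Suc n)) - c_well\<bar> = D_well"
    using next1 a1 a2
    by (cases right_well) (auto simp: wall_coeff_def c_well_def D_well_def half_diff)
qed

section \<open>Phase estimates\<close>

lemma tau_mono_step: "tau n \<le> tau (Suc n)"
  using tau_step[of n] w_pos[of n] by simp

lemma tau_mono: "m \<le> n \<Longrightarrow> tau m \<le> tau n"
  using tau_mono_step by (rule lift_Suc_mono_le)

lemma tau_nonneg: "tau n \<ge> 0" using tau_mono[of 0 n] by simp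

lemma horizon_nonneg: "eps * tau n \<le> T \<Longrightarrow> 0 \<le> T"
  using eps tau_nonneg[of n] by (meson mult_nonneg_nonneg less_imp_le order_trans)

lemma slow_time_le: "m \<le> n \<Longrightarrow> eps * tau n \<le> T \<Longrightarrow> eps * tau m \<le> T"
  using tau_mono[of m n] eps by (meson mult_left_mono less_imp_le order_trans)

lemma flight_length_ge: "1 \<le> j \<Longrightarrow> \<bar>q (Suc j) - q j\<bar> \<ge> L_min"
  using outer_step(2)[of j] trapped_step(1)[of j] a1 a2
  by (cases "j < N") (auto simp: L_min_def L_well_def)

lemma flight_length_le: "\<bar>q (Suc j) - q j\<bar> \<le> a1 + a2"
  using first_flight outer_step(2)[of j] trapped_step(1)[of j] a1 a2
  by (cases "j = 0"; cases "j < N") (auto simp: L_well_def)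

lemma tau_ge_linear: "tau (Suc n) \<ge> real n * (L_min * w_init)"
proof (induction n)
  case (Suc n)
  have "L_min * w_init \<le> \<bar>q (Suc (Suc n)) - q (Suc n)\<bar> * w (Suc n)"
    using flight_length_ge[of "Suc n"] w_mono[of 0 "Suc n"] L_min_pos w_init_pos
    by (intro mult_mono) auto
  then show ?case using Suc tau_step[of "Suc n"] by (simp add: algebra_simps)
qed (simp add: tau_nonneg)

lemma w_1_le: "w 1 \<le> w_init * (1 + 2 * eps * c_max)" "w 1 \<le> 2 * w_init"
proof -
  show "w 1 \<le> w_init * (1 + 2 * eps * c_max)" using w_step_le[of 0] by simp
  moreover have "w_init * (1 + 2 * eps * c_max) \<le> w_init * 2"
    using eps_small w_init_pos by (intro mult_left_mono) (auto simp: c_max_def)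
  ultimately show "w 1 \<le> 2 * w_init" by simp
qed

text \<open>Since every flight after the first is at least \<open>L_min\<close> long, the relative growth
  \<open>2\<epsilon>c_max\<close> of \<open>w\<close> per collision is at most \<open>2 k_max\<close> per unit of slow time.\<close>
lemma w_le_max:
  assumes "eps * tau n \<le> T"
  shows "w n \<le> w_max T"
proof -
  have increment: "w (Suc m) - w m \<le> 2 * k_max * (eps * (tau (Suc m) - tau m))" if "1 \<le> m" for m
  proof -
    have "L_min * w m \<le> tau (Suc m) - tau m"
      using tau_step[of m] flight_length_ge[OF that] w_pos[of m] by (simp add: mult_right_mono)
    then have "2 * k_max * (eps * (L_min * w m)) \<le> 2 * k_max * (eps * (tau (Suc m) - tau m))"
      using eps k_max_pos by (simp add: mult_left_mono)
    moreover have "2 * k_max * (eps * (L_min * w m)) = 2 * eps * c_max * w m"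
      using L_min_pos by (simp add: k_max_def)
    ultimately have "2 * eps * c_max * w m \<le> 2 * k_max * (eps * (tau (Suc m) - tau m))" by simp
    then show ?thesis using w_step_le[of m] by (simp add: algebra_simps)
  qed
  have linear: "w m \<le> w 1 + 2 * k_max * (eps * (tau m - tau 1))" if "1 \<le> m" for m
    using that
  proof (induction m rule: dec_induct)
    case (step m)
    then show ?case using increment[of m] by (simp add: algebra_simps)
  qed simp
  have "eps * (tau n - tau 1) \<le> T"
    using assms mult_nonneg_nonneg[OF less_imp_le[OF eps] tau_nonneg[of 1]]
    by (simp add: algebra_simps)
  then have drift: "2 * k_max * (eps * (tau n - tau 1)) \<le> 2 * k_max * T"
    using k_max_pos by (simp add: mult_left_mono)
  show ?thesis
  proof (cases "n = 0")
    case True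
    then show ?thesis using k_max_pos w_init_pos horizon_nonneg[OF assms] by (simp add: w_max_def)
  next
    case False
    then show ?thesis using linear[of n] drift w_1_le(2) unfolding w_max_def by linarith
  qed
qed

lemma R_le: "R \<le> (eps + del) * (2 * B + 2 * c_max\<^sup>2)" "R \<le> 2 * B + c_max"
proof -
  show "R \<le> (eps + del) * (2 * B + 2 * c_max\<^sup>2)" unfolding R_def using eps del B c_max_pos
    by (simp add: algebra_simps mult_left_mono mult_right_mono)
  have "del * B \<le> B" using del_le_1 B mult_right_mono[of del 1 B] by simp
  moreover have "eps * c_max\<^sup>2 \<le> c_max / 2" using eps_small c_max_pos unfolding c_max_def[symmetric]
    by (simp add: power2_eq_square mult.assoc[symmetric])
  ultimately show "R \<le> 2 * B + c_max" unfolding R_def by simp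
qed

lemma drift_error_le:
  assumes "0 \<le> D" "D \<le> c_max" "0 \<le> cb" "cb \<le> c_max"
  shows "R + eps * D * (cb + D + R) / 2 \<le> (eps + del) * rho_max"
proof -
  have "0 \<le> cb + D + R" using assms R_nonneg by simp
  then have "D * (cb + D + R) \<le> c_max * (3 * c_max + 2 * B)"
    using assms R_le(2) by (intro mult_mono) auto
  then have "eps * (D * (cb + D + R)) \<le> eps * (c_max * (3 * c_max + 2 * B))"
    using eps by (simp add: mult_left_mono)
  then have "eps * D * (cb + D + R) / 2 \<le> eps * (c_max * (3 * c_max + 2 * B) / 2)"
    by (simp only: mult.assoc times_divide_eq_right divide_right_mono zero_le_numeral)
  also have "\<dots> \<le> (eps + del) * (c_max * (3 * c_max + 2 * B) / 2)"
    using del c_max_pos B by (intro mult_right_mono) auto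
  finally have "R + eps * D * (cb + D + R) / 2
      \<le> (eps + del) * (2 * B + 2 * c_max\<^sup>2) + (eps + del) * (c_max * (3 * c_max + 2 * B) / 2)"
    using R_le(1) by linarith
  also have "\<dots> = (eps + del) * rho_max" by (simp add: rho_max_def distrib_left)
  finally show ?thesis .
qed

lemma phase_estimate:
  assumes "N0 \<le> n" "eps * tau n \<le> T" "L_min \<le> L" "0 \<le> cb" "cb \<le> c_max" "0 \<le> D" "D \<le> c_max"
    and length: "\<And>j. N0 \<le> j \<Longrightarrow> j < n \<Longrightarrow> \<bar>q (Suc j) - q j\<bar> = L"
    and alternating: "\<And>j. N0 \<le> j \<Longrightarrow> Suc j < n \<Longrightarrow>
      wall_coeff (q (Suc (Suc j))) = 2 * cb - wall_coeff (q (Suc j))"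
    and start: "N0 < n \<Longrightarrow> \<bar>wall_coeff (q (Suc N0)) - cb\<bar> \<le> D"
  shows "\<bar>w n - w N0 - eps * (cb / L) * (tau n - tau N0)\<bar> \<le> (eps + del) * err_phase T"
proof -
  define rho where "rho = R + eps * D * (cb + D + R) / 2"
  have L: "L > 0" using assms(3) L_min_pos by simp
  have "\<bar>w n - w N0 - eps * (cb / L) * (tau n - tau N0)\<bar>
        \<le> eps * rho / L * (tau n - tau N0) + eps * D * (w n + w N0) / 2"
    unfolding rho_def
  proof (rule periodic_growth_estimate[where c = "\<lambda>j. wall_coeff (q (Suc j))" and r = rem])
    show "cb = cb / L * L" using L by simp
    show "tau (Suc j) = tau j + L * w j" if "N0 \<le> j" "j < n" for j
      using tau_step[of j] length[OF that] by (simp add: mult.commute)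
    show "w (Suc j) = w j + eps * w j * (wall_coeff (q (Suc j)) + rem j)" for j by (rule w_step)
    show "\<bar>rem j\<bar> \<le> R" for j using rem_bounds[of j] by simp
    show "0 \<le> w j" for j using w_pos[of j] by simp
  qed (use L eps assms in auto)
  also have "\<dots> \<le> (eps + del) * (rho_max * T / L_min) + (eps + del) * (c_max * w_max T)"
  proof (rule add_mono)
    have tau_N0: "eps * tau N0 \<le> eps * tau n" "0 \<le> eps * tau N0"
      using tau_mono[OF assms(1)] tau_nonneg[of N0] eps by (auto simp: mult_left_mono)
    have rho: "0 \<le> rho" "rho \<le> (eps + del) * rho_max"
      using drift_error_le assms eps R_nonneg by (auto simp: rho_def)
    have "rho / L \<le> (eps + del) * rho_max / L_min"
      using rho assms(3) L_min_pos by (intro frac_le) auto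
    moreover have "0 \<le> rho / L" using rho L by simp
    moreover have "0 \<le> eps * (tau n - tau N0)" "eps * (tau n - tau N0) \<le> T"
      using tau_N0 assms(2) by (auto simp: algebra_simps)
    ultimately have "rho / L * (eps * (tau n - tau N0)) \<le> (eps + del) * rho_max / L_min * T"
      by (intro mult_mono) auto
    then show "eps * rho / L * (tau n - tau N0) \<le> (eps + del) * (rho_max * T / L_min)"
      by (simp add: field_simps)
    have "w n + w N0 \<le> 2 * w_max T"
      using w_le_max[OF assms(2)] w_le_max[OF slow_time_le[OF assms(1,2)]] by simp
    then have "D * (w n + w N0) \<le> c_max * (2 * w_max T)"
      using assms(6,7) w_pos[of n] w_pos[of N0] c_max_pos by (intro mult_mono) auto
    then have "D * (w n + w N0) / 2 \<le> c_max * w_max T" by simp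
    moreover have "0 \<le> D * (w n + w N0) / 2" using assms(6) w_pos[of n] w_pos[of N0] by simp
    ultimately have "eps * (D * (w n + w N0) / 2) \<le> (eps + del) * (c_max * w_max T)"
      using eps del by (intro mult_mono) auto
    then show "eps * D * (w n + w N0) / 2 \<le> (eps + del) * (c_max * w_max T)" by simp
  qed
  finally show ?thesis by (simp add: err_phase_def distrib_left)
qed

lemma eps_le_sum: "0 \<le> x \<Longrightarrow> eps * x \<le> (eps + del) * x"
  using del by (simp add: mult_right_mono)

lemma outer_phase_estimate:
  assumes "n \<le> N" "eps * tau n \<le> T"
  shows "\<bar>w n - w_init - k_outer * (eps * tau n)\<bar> \<le> (eps + del) * err_outer T"
proof (cases "n = 0")
  case True
  then show ?thesis using err_outer_nonneg[OF horizon_nonneg[OF assms(2)]] eps del by simp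
next
  case False
  have phase: "\<bar>w n - w 1 - eps * k_outer * (tau n - tau 1)\<bar> \<le> (eps + del) * err_phase T"
  proof -
    have outer: "q (Suc j) = a2 \<or> q (Suc j) = -a1" if "Suc j \<le> N" for j
      using outer_phase[of "Suc j"] that by auto
    have "\<bar>w n - w 1 - eps * ((c1 + c2) / 2 / (a1 + a2)) * (tau n - tau 1)\<bar>
          \<le> (eps + del) * err_phase T"
    proof (rule phase_estimate[where D = "\<bar>c1 - c2\<bar> / 2"])
      show "wall_coeff (q (Suc (Suc j))) = 2 * ((c1 + c2) / 2) - wall_coeff (q (Suc j))"
        if "1 \<le> j" "Suc j < n" for j
        using outer[of j] outer_step(1)[of "Suc j"] that assms(1) a1 a2
        by (auto simp: wall_coeff_def field_simps)
      show "\<bar>wall_coeff (q (Suc 1)) - (c1 + c2) / 2\<bar> \<le> \<bar>c1 - c2\<bar> / 2" if "1 < n"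
        using outer[of 1] that assms(1) a1 a2 by (auto simp: wall_coeff_def abs_if field_simps)
    qed (use False assms outer_step(2) a1 a2 c1 c2 c3 B in \<open>auto simp: L_min_def c_max_def\<close>)
    then show ?thesis by (simp add: k_outer_def)
  qed
  have w_1: "\<bar>w 1 - w_init\<bar> \<le> (eps + del) * (2 * c_max * w_init)"
    using w_1_le(1) w_mono[of 0 1] eps_le_sum[of "2 * c_max * w_init"] c_max_pos w_init_pos
    by (simp add: algebra_simps)
  have tau_1: "0 \<le> k_outer * (eps * tau 1)"
    "k_outer * (eps * tau 1) \<le> (eps + del) * (k_max * (a1 + a2) * w_init)"
  proof -
    have "tau 1 \<le> (a1 + a2) * w_init" using tau_step[of 0] first_flight w_init_pos
      by (simp add: mult_right_mono)
    then have "k_outer * (eps * tau 1) \<le> k_max * (eps * ((a1 + a2) * w_init))"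
      using k_outer_le_k_max k_outer_pos eps tau_nonneg[of 1] by (intro mult_mono) auto
    also have "\<dots> \<le> (eps + del) * (k_max * (a1 + a2) * w_init)"
      using eps_le_sum[of "k_max * (a1 + a2) * w_init"] k_max_pos a1 a2 w_init_pos
      by (simp add: algebra_simps)
    finally show "k_outer * (eps * tau 1) \<le> (eps + del) * (k_max * (a1 + a2) * w_init)" .
    show "0 \<le> k_outer * (eps * tau 1)" using k_outer_pos eps tau_nonneg[of 1] by simp
  qed
  have "w n - w_init - k_outer * (eps * tau n)
        = (w n - w 1 - eps * k_outer * (tau n - tau 1)) + (w 1 - w_init) - k_outer * (eps * tau 1)"
    by (simp add: algebra_simps)
  then show ?thesis using phase w_1 tau_1 by (simp add: err_outer_def abs_le_iff algebra_simps)
qed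

lemma w_N_bounds: "w_crit \<le> w N" "w N \<le> w_crit * (1 + 2 * eps * c_max)"
proof -
  show "w_crit \<le> w N" using high_iff[of N] high_iff_less_N[of N] by simp
  obtain m where m: "N = Suc m" using N_pos by (cases N) auto
  have "w m \<le> w_crit" using high_iff[of m] high_iff_less_N[of m] m by simp
  then have "w m * (1 + 2 * eps * c_max) \<le> w_crit * (1 + 2 * eps * c_max)"
    using eps c_max_pos by (intro mult_right_mono) auto
  then show "w N \<le> w_crit * (1 + 2 * eps * c_max)" using w_step_le[of m] m by simp
qed

lemma w_N_near_crit: "\<bar>w N - w_crit\<bar> \<le> (eps + del) * (2 * c_max * w_crit)"
  using w_N_bounds eps_le_sum[of "2 * c_max * w_crit"] c_max_pos w_crit_pos
  by (simp add: algebra_simps)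

text \<open>The trapping time \<open>\<epsilon> \<tau>\<^sub>N\<close> is close to \<open>t\<^sub>0\<close>: there \<open>w\<close> has just reached
  \<open>w_crit\<close>, while on the outer phase it grows linearly at rate \<open>k_outer\<close>.\<close>
lemma trapping_time_estimate:
  assumes "eps * tau N \<le> T"
  shows "k_outer * \<bar>eps * tau N - t_crit\<bar> \<le> (eps + del) * (err_outer T + 2 * c_max * w_crit)"
proof -
  have kt: "k_outer * t_crit = w_crit - w_init" using k_outer_pos by (simp add: t_crit_def)
  have "k_outer * \<bar>eps * tau N - t_crit\<bar> = \<bar>k_outer * (eps * tau N) - k_outer * t_crit\<bar>"
    unfolding right_diff_distrib[symmetric] abs_mult using k_outer_pos by simp
  also have "\<dots> = \<bar>(w N - w_crit) - (w N - w_init - k_outer * (eps * tau N))\<bar>"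
    by (simp add: kt algebra_simps)
  also have "\<dots> \<le> \<bar>w N - w_crit\<bar> + \<bar>w N - w_init - k_outer * (eps * tau N)\<bar>"
    by (rule abs_triangle_ineq4)
  finally show ?thesis
    using w_N_near_crit outer_phase_estimate[OF order_refl assms] by (simp add: distrib_left)
qed

lemma k_well_pos: "0 < k_well" and k_well_le_k_max: "k_well \<le> k_max"
  using a1 a2 c1 c2 c3 B
  by (auto simp: k_well_def c_well_def L_well_def c_max_def L_min_def intro!: rate_le_k_max)

lemma trapped_phase_estimate:
  assumes "N \<le> n" "eps * tau n \<le> T"
  shows "\<bar>w n - w_crit - k_well * (eps * tau n - t_crit)\<bar> \<le> (eps + del) * err_well T"
proof -
  note k_well = k_well_pos k_well_le_k_max
  have phase: "\<bar>w n - w N - eps * k_well * (tau n - tau N)\<bar> \<le> (eps + del) * err_phase T"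
    unfolding k_well_def
    by (rule phase_estimate[where D = D_well])
      (use assms trapped_step c1 c2 c3 B a1 a2
        in \<open>auto simp: L_min_def L_well_def c_well_def D_well_def c_max_def\<close>)
  define E where "E = err_outer T + 2 * c_max * w_crit"
  have "k_well * (k_outer * \<bar>eps * tau N - t_crit\<bar>) \<le> k_max * ((eps + del) * E)"
    using trapping_time_estimate[OF slow_time_le[OF assms]] k_well k_outer_pos
    by (rule_tac mult_mono) (auto simp: E_def)
  then have "k_well * \<bar>eps * tau N - t_crit\<bar> \<le> (eps + del) * (k_max * E / k_outer)"
    using k_outer_pos by (simp add: pos_le_divide_eq mult.left_commute mult.commute)
  then have crit: "\<bar>k_well * (t_crit - eps * tau N)\<bar> \<le> (eps + del) * (k_max * E / k_outer)"
    using k_well by (simp add: abs_mult abs_minus_commute)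
  have "w n - w_crit - k_well * (eps * tau n - t_crit)
        = (w n - w N - eps * k_well * (tau n - tau N)) + (w N - w_crit) + k_well * (t_crit - eps * tau N)"
    by (simp add: algebra_simps)
  then show ?thesis
    using phase w_N_near_crit crit by (simp add: err_well_def E_def abs_le_iff distrib_left)
qed

section \<open>Convergence to the limit motion\<close>

lemma slow_time_interpolation:
  assumes "0 < t"
  obtains n th where "eps * tau n \<le> t" "t - eps * tau n \<le> eps * (a1 + a2) * w n"
    "0 \<le> th" "th \<le> 1"
    "Hhat a1 a2 HO c1 c2 c3 eps del eta xi zeta q0 p0 t
       = 1 / (2 * (w n)\<^sup>2) + (1 / (2 * (w (Suc n))\<^sup>2) - 1 / (2 * (w n)\<^sup>2)) * th"
    "edge_at a1 a2 HO c1 c2 c3 eps del eta xi zeta q0 p0 t = cedge HO (S n)"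
proof -
  define u where "u = t / eps"
  have "\<exists>m. u < tau (Suc m)"
  proof -
    obtain m :: nat where "u < real m * (L_min * w_init)"
      using reals_Archimedean3 L_min_pos w_init_pos by (meson mult_pos_pos)
    then show ?thesis using tau_ge_linear[of m] by (intro exI[of _ m]) simp
  qed
  moreover define n where "n = (LEAST m. u < tau (Suc m))"
  ultimately have above: "u < tau (Suc n)" by (metis LeastI_ex)
  have below: "tau n \<le> u"
  proof (cases n)
    case 0
    then show ?thesis using assms eps by (simp add: u_def)
  next
    case (Suc k)
    then show ?thesis using not_less_Least[of k "\<lambda>m. u < tau (Suc m)"] n_def by simp
  qed
  have idx: "cidx a1 a2 HO c1 c2 c3 eps del eta xi zeta q0 p0 u = n"
    unfolding n_def cidx_def tau_def S_def ..
  show ?thesis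
  proof (rule that[of n "(u - tau n) / (tau (Suc n) - tau n)"])
    show "eps * tau n \<le> t" using below eps by (simp add: u_def pos_le_divide_eq mult.commute)
    have "\<bar>q (Suc n) - q n\<bar> * w n \<le> (a1 + a2) * w n"
      using flight_length_le[of n] w_pos[of n] by (simp add: mult_right_mono)
    then have "u - tau n \<le> (a1 + a2) * w n" using above tau_step[of n] by simp
    then have "eps * (u - tau n) \<le> eps * ((a1 + a2) * w n)" using eps by (simp add: mult_left_mono)
    then show "t - eps * tau n \<le> eps * (a1 + a2) * w n" using eps by (simp add: u_def algebra_simps)
    show "0 \<le> (u - tau n) / (tau (Suc n) - tau n)" "(u - tau n) / (tau (Suc n) - tau n) \<le> 1"
      using below above by auto
    show "Hhat a1 a2 HO c1 c2 c3 eps del eta xi zeta q0 p0 t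
      = 1 / (2 * (w n)\<^sup>2) + (1 / (2 * (w (Suc n))\<^sup>2) - 1 / (2 * (w n)\<^sup>2)) *
          ((u - tau n) / (tau (Suc n) - tau n))"
      unfolding Hhat_def Let_def u_def[symmetric] idx S_def[symmetric] energy_eq
      by (simp add: tau_def)
    show "edge_at a1 a2 HO c1 c2 c3 eps del eta xi zeta q0 p0 t = cedge HO (S n)"
      unfolding edge_at_def u_def[symmetric] idx S_def[symmetric] ..
  qed
qed

lemma interpolated_energy_close:
  assumes "0 \<le> th" "th \<le> 1" "w_init \<le> W"
    and close: "\<bar>w n - W\<bar> + 2 * eps * c_max * w n \<le> kap * w_init ^ 3"
  shows "\<bar>1 / (2 * (w n)\<^sup>2) + (1 / (2 * (w (Suc n))\<^sup>2) - 1 / (2 * (w n)\<^sup>2)) * th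
           - 1 / (2 * W\<^sup>2)\<bar> \<le> kap"
proof (rule convex_combination_dist_le[OF assms(1,2)])
  have w3: "w_init ^ 3 > 0" using w_init_pos by simp
  have "\<bar>w (Suc n) - w n\<bar> \<le> 2 * eps * c_max * w n"
    using w_step_le[of n] w_mono_step[of n] by (simp add: algebra_simps)
  then have close_m: "\<bar>w m - W\<bar> \<le> kap * w_init ^ 3" if "m = n \<or> m = Suc n" for m
    using that close by auto
  have "\<bar>1 / (2 * (w m)\<^sup>2) - 1 / (2 * W\<^sup>2)\<bar> \<le> kap" if "m = n \<or> m = Suc n" for m
  proof -
    have "\<bar>1 / (2 * (w m)\<^sup>2) - 1 / (2 * W\<^sup>2)\<bar> \<le> \<bar>w m - W\<bar> / w_init ^ 3"
      using inverse_square_diff_le[OF w_init_pos _ assms(3)] w_mono[of 0 m] by simp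
    also have "\<dots> \<le> kap"
      using close_m[OF that] by (simp add: pos_divide_le_eq[OF w3])
    finally show ?thesis .
  qed
  then show "\<bar>1 / (2 * (w n)\<^sup>2) - 1 / (2 * W\<^sup>2)\<bar> \<le> kap"
    "\<bar>1 / (2 * (w (Suc n))\<^sup>2) - 1 / (2 * W\<^sup>2)\<bar> \<le> kap" by auto
qed

lemma edge_outer: "n < N \<Longrightarrow> cedge HO (S n) = 3"
  using high_iff_less_N[of n] by (simp add: cedge_def high_def cenergy_def p_def)

lemma edge_trapped: "N \<le> n \<Longrightarrow> cedge HO (S n) = (if right_well then 2 else 1)"
proof -
  assume "N \<le> n"
  then have "\<not> cenergy (S n) > HO"
    using high_iff_less_N[of n] by (simp add: high_def cenergy_def p_def)
  then show ?thesis using trapped_phase[OF \<open>N \<le> n\<close>] a1 a2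
    by (auto simp: cedge_def q_def p_def split: if_splits)
qed

lemma k_well_eq: "k_well = (if right_well then (c2 + c3) / (2 * a2) else (c1 + c3) / (2 * a1))"
  by (simp add: k_well_def c_well_def L_well_def)

lemma w_near_limit_line:
  assumes n: "eps * tau n \<le> t" "t - eps * tau n \<le> eps * (a1 + a2) * w n" and "t \<le> T"
  shows "n < N \<Longrightarrow>
      \<bar>w n - (w_init + k_outer * t)\<bar> + 2 * eps * c_max * w n \<le> (eps + del) * err_total T"
    and "N \<le> n \<Longrightarrow>
      \<bar>w n - (w_crit + k_well * (t - t_crit))\<bar> + 2 * eps * c_max * w n \<le> (eps + del) * err_total T"
proof -
  define G where "G = (2 * c_max + k_max * (a1 + a2)) * w_max T"
  have T: "0 \<le> T" "eps * tau n \<le> T" using assms(3) n(1) horizon_nonneg[of n T] by auto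
  have lag: "k * (t - eps * tau n) + 2 * eps * c_max * w n \<le> (eps + del) * G"
    if "0 \<le> k" "k \<le> k_max" for k
  proof -
    have "k * (t - eps * tau n) \<le> k_max * (eps * (a1 + a2) * w n)"
      using that n by (intro mult_mono) auto
    then have "k * (t - eps * tau n) + 2 * eps * c_max * w n
        \<le> eps * ((2 * c_max + k_max * (a1 + a2)) * w n)"
      by (simp add: algebra_simps)
    also have "\<dots> \<le> eps * G"
      using w_le_max[OF T(2)] eps c_max_pos k_max_pos a1 a2 by (simp add: G_def mult_left_mono)
    also have "\<dots> \<le> (eps + del) * G"
      using eps_le_sum w_max_nonneg[OF T(1)] c_max_pos k_max_pos a1 a2 by (simp add: G_def)
    finally show ?thesis .
  qed
  have triangle: "\<bar>w n - (w0 + k * (t - s))\<bar>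
      \<le> \<bar>w n - w0 - k * (eps * tau n - s)\<bar> + k * (t - eps * tau n)"
    if "0 \<le> k" for w0 k s
  proof -
    have "w n - (w0 + k * (t - s)) = (w n - w0 - k * (eps * tau n - s)) - k * (t - eps * tau n)"
      by (simp add: algebra_simps)
    moreover have "\<bar>k * (t - eps * tau n)\<bar> = k * (t - eps * tau n)" using that n(1) by simp
    ultimately show ?thesis
      using abs_triangle_ineq4[of "w n - w0 - k * (eps * tau n - s)" "k * (t - eps * tau n)"]
      by simp
  qed
  have sum: "(eps + del) * x + (eps + del) * G \<le> (eps + del) * err_total T"
    if "x + G \<le> err_total T" for x
    using mult_left_mono[OF that, of "eps + del"] eps del by (simp add: distrib_left)
  show "\<bar>w n - (w_init + k_outer * t)\<bar> + 2 * eps * c_max * w n \<le> (eps + del) * err_total T"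
    if "n < N"
    using triangle[of k_outer w_init 0] outer_phase_estimate[OF less_imp_le[OF that] T(2)]
      lag[of k_outer] k_outer_pos k_outer_le_k_max sum[OF err_total_ge(1)[OF T(1), folded G_def]]
    by (simp add: G_def)
  show "\<bar>w n - (w_crit + k_well * (t - t_crit))\<bar> + 2 * eps * c_max * w n
      \<le> (eps + del) * err_total T" if "N \<le> n"
    using triangle[of k_well w_crit t_crit] trapped_phase_estimate[OF that T(2)]
      lag[of k_well] k_well_pos k_well_le_k_max sum[OF err_total_ge(2)[OF T(1), folded G_def]]
    by (simp add: G_def)
qed

lemma phase_at_slow_time:
  assumes n: "eps * tau n \<le> t" "t - eps * tau n \<le> eps * (a1 + a2) * w n" and "t \<le> T"
    and separated: "t \<noteq> t_crit \<longrightarrow> (eps + del) * err_total T < k_outer * \<bar>t - t_crit\<bar>"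
  shows "N \<le> n \<Longrightarrow> t_crit \<le> t" and "n < N \<Longrightarrow> t \<le> t_crit"
proof -
  have T: "0 \<le> T" "eps * tau n \<le> T" using assms(3) n(1) horizon_nonneg[of n T] by auto
  show "t_crit \<le> t" if "N \<le> n"
  proof (rule ccontr)
    assume "\<not> t_crit \<le> t"
    have "eps * tau N \<le> eps * tau n" using tau_mono[OF that] eps by (simp add: mult_left_mono)
    then have "k_outer * (t_crit - t) \<le> k_outer * \<bar>eps * tau N - t_crit\<bar>"
      using n(1) k_outer_pos by (intro mult_left_mono) auto
    also have "\<dots> \<le> (eps + del) * (err_outer T + 2 * c_max * w_crit)"
      using trapping_time_estimate[OF slow_time_le[OF that T(2)]] .
    also have "\<dots> \<le> (eps + del) * err_total T"
      using err_total_ge(3)[OF T(1)] eps del by (intro mult_left_mono) auto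
    finally show False using separated \<open>\<not> t_crit \<le> t\<close> by simp
  qed
  show "t \<le> t_crit" if "n < N"
  proof (rule ccontr)
    assume "\<not> t \<le> t_crit"
    have "0 \<le> 2 * eps * c_max * w n" using eps c_max_pos w_pos[of n] by simp
    then have "w_init + k_outer * t - w n \<le> (eps + del) * err_total T"
      using w_near_limit_line(1)[OF n assms(3) that] by (simp add: abs_le_iff)
    moreover have "w n < w_crit" using high_iff high_iff_less_N that by simp
    moreover have "w_init + k_outer * t_crit = w_crit" using k_outer_pos by (simp add: t_crit_def)
    moreover have "(eps + del) * err_total T < k_outer * (t - t_crit)"
      using separated \<open>\<not> t \<le> t_crit\<close> by simp
    ultimately show False by (simp add: algebra_simps)
  qed
qed

lemma near_limit_motion_if_small:
  assumes t: "0 < t" "t < T"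
    and small: "(eps + del) * err_total T \<le> kap * w_init ^ 3"
    and separated: "t \<noteq> t_crit \<longrightarrow> (eps + del) * err_total T < k_outer * \<bar>t - t_crit\<bar>"
  shows "near_limit_motion a1 a2 HO (p0\<^sup>2 / 2) c1 c2 c3 eps del eta xi zeta q0 p0 t kap"
proof -
  obtain n th where n: "eps * tau n \<le> t" "t - eps * tau n \<le> eps * (a1 + a2) * w n"
    and th: "0 \<le> th" "th \<le> 1"
    and Hh: "Hhat a1 a2 HO c1 c2 c3 eps del eta xi zeta q0 p0 t
       = 1 / (2 * (w n)\<^sup>2) + (1 / (2 * (w (Suc n))\<^sup>2) - 1 / (2 * (w n)\<^sup>2)) * th"
    and ed: "edge_at a1 a2 HO c1 c2 c3 eps del eta xi zeta q0 p0 t = cedge HO (S n)"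
    by (rule slow_time_interpolation[OF t(1)])
  note close = w_near_limit_line[OF n less_imp_le[OF t(2)]]
  note phase = phase_at_slow_time[OF n less_imp_le[OF t(2)] separated]
  have on_outer: "\<bar>Hhat a1 a2 HO c1 c2 c3 eps del eta xi zeta q0 p0 t
                    - 1 / (2 * (w_init + k_outer * t)\<^sup>2)\<bar> \<le> kap" if "n < N"
    unfolding Hh using order_trans[OF close(1)[OF that] small] k_outer_pos t
    by (intro interpolated_energy_close th) auto
  have on_trapped: "\<bar>Hhat a1 a2 HO c1 c2 c3 eps del eta xi zeta q0 p0 t
                      - 1 / (2 * (w_crit + k_well * (t - t_crit))\<^sup>2)\<bar> \<le> kap" if "N \<le> n"
    unfolding Hh using order_trans[OF close(2)[OF that] small] phase(1)[OF that] k_well_pos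
      w_init_lt_crit
    by (intro interpolated_energy_close th) (auto intro: add_increasing2)
  show ?thesis
    unfolding near_limit_motion_def Let_def t0_time_eq Hlim3_eq Hlim1_eq Hlim2_eq ed
  proof (intro conjI[OF impI conjI[OF impI impI]])
    assume "t < t_crit"
    then have "n < N" using phase(1) by force
    then show "cedge HO (S n) = 3 \<and> \<bar>Hhat a1 a2 HO c1 c2 c3 eps del eta xi zeta q0 p0 t
        - 1 / (2 * (w_init + k_outer * t)\<^sup>2)\<bar> \<le> kap"
      using on_outer edge_outer by simp
  next
    assume "t = t_crit"
    then show "\<bar>Hhat a1 a2 HO c1 c2 c3 eps del eta xi zeta q0 p0 t - HO\<bar> \<le> kap"
      using on_outer on_trapped w_crit_sq k_outer_pos by (cases "n < N") (auto simp: t_crit_def)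
  next
    assume "t_crit < t"
    then have "N \<le> n" using phase(2) by force
    then show "cedge HO (S n) = 1 \<and> \<bar>Hhat a1 a2 HO c1 c2 c3 eps del eta xi zeta q0 p0 t
        - 1 / (2 * (w_crit + (c1 + c3) / (2 * a1) * (t - t_crit))\<^sup>2)\<bar> \<le> kap \<or>
      cedge HO (S n) = 2 \<and> \<bar>Hhat a1 a2 HO c1 c2 c3 eps del eta xi zeta q0 p0 t
        - 1 / (2 * (w_crit + (c2 + c3) / (2 * a2) * (t - t_crit))\<^sup>2)\<bar> \<le> kap"
      using on_trapped edge_trapped k_well_eq by (cases right_well) auto
  qed
qed

end

lemma (in billiard_params) eventually_near_limit_motion:
  assumes q0: "-a1 \<le> q0" "q0 \<le> a2" and t: "0 < t" "t < T" and kap: "kap > 0"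
  shows "\<forall>\<^sub>F (eps, del) in at_right 0 \<times>\<^sub>F at_right 0.
           \<forall>eta xi zeta. (\<forall>k. eta k \<in> {0..B} \<and> xi k \<in> {0..B} \<and> zeta k \<in> {0..B}) \<longrightarrow>
             near_limit_motion a1 a2 HO (p0\<^sup>2 / 2) c1 c2 c3 eps del eta xi zeta q0 p0 t kap"
proof -
  define Q where "Q = min (kap * w_init ^ 3) (if t = t_crit then 1 else k_outer * \<bar>t - t_crit\<bar>)"
  have "Q > 0" using kap w_init_pos k_outer_pos by (simp add: Q_def)
  define a where "a = min 1 (min (1 / (2 * c_max)) (Q / (2 * (err_total T + 1))))"
  have err: "0 \<le> err_total T"
    using err_outer_nonneg err_well_nonneg w_max_nonneg c_max_pos w_crit_pos k_max_pos a1 a2 t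
    by (simp add: err_total_def)
  have "a > 0" using c_max_pos \<open>Q > 0\<close> err by (simp add: a_def)
  then have "\<forall>\<^sub>F x in at_right (0::real). 0 < x \<and> x < a"
    unfolding eventually_at_right_field by blast
  from eventually_prodI[OF this this]
  show ?thesis
  proof (rule eventually_mono)
    fix x :: "real \<times> real"
    obtain eps del where x: "x = (eps, del)" by fastforce
    assume "(0 < fst x \<and> fst x < a) \<and> (0 < snd x \<and> snd x < a)"
    then have eps: "0 < eps" "eps < a" and del: "0 < del" "del < a" by (auto simp: x)
    have "(eps + del) * err_total T \<le> (eps + del) * (err_total T + 1)"
      using eps del by simp
    also have "\<dots> < (2 * a) * (err_total T + 1)" using eps del err by simp
    also have "\<dots> = a * (2 * (err_total T + 1))" by simp
    also have "\<dots> \<le> Q"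
    proof -
      have "a \<le> Q / (2 * (err_total T + 1))" by (simp add: a_def)
      then show ?thesis using err by (simp add: pos_le_divide_eq)
    qed
    finally have small: "(eps + del) * err_total T < Q" .
    have eps_small: "eps * (c1 + c2 + c3 + B) \<le> 1 / 2"
    proof -
      have "eps * c_max \<le> 1 / (2 * c_max) * c_max"
        using eps c_max_pos by (intro mult_right_mono) (auto simp: a_def)
      then show ?thesis using c_max_pos by (simp add: c_max_def[symmetric])
    qed
    show "case x of (eps, del) \<Rightarrow> \<forall>eta xi zeta.
            (\<forall>k. eta k \<in> {0..B} \<and> xi k \<in> {0..B} \<and> zeta k \<in> {0..B}) \<longrightarrow>
            near_limit_motion a1 a2 HO (p0\<^sup>2 / 2) c1 c2 c3 eps del eta xi zeta q0 p0 t kap"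
      unfolding x prod.case
    proof (intro allI impI)
      fix eta xi zeta :: "nat \<Rightarrow> real"
      assume "\<forall>k. eta k \<in> {0..B} \<and> xi k \<in> {0..B} \<and> zeta k \<in> {0..B}"
      then have "billiard a1 a2 HO c1 c2 c3 B p0 eps del eta xi zeta q0"
        using eps del eps_small q0 by unfold_locales (auto simp: a_def)
      then show "near_limit_motion a1 a2 HO (p0\<^sup>2 / 2) c1 c2 c3 eps del eta xi zeta q0 p0 t kap"
        by (rule billiard.near_limit_motion_if_small[OF _ t]) (use small in \<open>auto simp: Q_def\<close>)
    qed
  qed
qed

lemma (in prob_space) AE_all_of_prob_1:
  assumes "\<And>k::nat. prob {x \<in> space M. P k x} = 1"
  shows "AE x in M. \<forall>k. P k x"
  unfolding AE_all_countable using AE_prob_1[OF assms] by (auto elim: AE_mp)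

lemma eventually_exceptional_set_small:
  assumes "AE w in M. Q w" and "\<forall>\<^sub>F (x, y) in F. \<forall>w. Q w \<longrightarrow> P x y w" and "0 \<le> e"
  shows "\<forall>\<^sub>F (x, y) in F. \<exists>A \<in> sets M. measure M A \<le> e \<and> {w \<in> space M. \<not> P x y w} \<subseteq> A"
proof -
  obtain Z where Z: "{w \<in> space M. \<not> Q w} \<subseteq> Z" "emeasure M Z = 0" "Z \<in> sets M"
    using assms(1) by (rule AE_E)
  have "measure M Z \<le> e" using Z(2) assms(3) by (simp add: measure_def)
  show ?thesis
    using assms(2)
  proof (rule eventually_mono)
    fix xy assume "case xy of (x, y) \<Rightarrow> \<forall>w. Q w \<longrightarrow> P x y w"
    then show "case xy of (x, y) \<Rightarrow> \<exists>A \<in> sets M. measure M A \<le> e \<and> {w \<in> space M. \<not> P x y w} \<subseteq> A"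
      using Z(1,3) \<open>measure M Z \<le> e\<close> by (cases xy) (auto intro!: bexI[of _ Z])
  qed
qed

theorem corollary3p1:
  fixes M :: "'w measure"
    and eta xi zeta :: "nat \<Rightarrow> 'w \<Rightarrow> real"
    and a1 a2 HO H0 c1 c2 c3 alpha beta q0 p0 T :: real
  assumes "prob_space M"
    and "a1 > 0" "a2 > 0" "HO > 0" "c1 > 0" "c2 > 0" "c3 > 0"
    and "0 < alpha" "alpha < beta"
    and "\<And>k. eta k \<in> borel_measurable M" "\<And>k. xi k \<in> borel_measurable M"
    and "\<And>k. zeta k \<in> borel_measurable M"
    and "prob_space.indep_vars M (\<lambda>_. borel)
           (\<lambda>(j, k). if j = (0::nat) then eta k else if j = 1 then xi k else zeta k)
           ({0, 1, 2} \<times> UNIV)"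
    and "\<exists>g. continuous_on UNIV g \<and> (\<forall>x. 0 \<le> g x) \<and>
           (\<forall>k. distributed M lborel (eta k) (\<lambda>x. ennreal (g x)))"
    and "\<exists>g. continuous_on UNIV g \<and> (\<forall>x. 0 \<le> g x) \<and>
           (\<forall>k. distributed M lborel (xi k) (\<lambda>x. ennreal (g x)))"
    and "\<exists>g. continuous_on UNIV g \<and> (\<forall>x. 0 \<le> g x) \<and>
           (\<forall>k. distributed M lborel (zeta k) (\<lambda>x. ennreal (g x)))"
    and "\<And>k. measure M {w \<in> space M. alpha < eta k w \<and> eta k w < beta} = 1"
    and "\<And>k. measure M {w \<in> space M. alpha < xi k w \<and> xi k w < beta} = 1"
    and "\<And>k. measure M {w \<in> space M. alpha < zeta k w \<and> zeta k w < beta} = 1"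
    and "-a1 \<le> q0" "q0 \<le> a2" "p0\<^sup>2 / 2 = H0" "H0 > HO"
    and "0 < T"
  shows "\<forall>t. 0 < t \<and> t < T \<longrightarrow> (\<forall>\<kappa>>0. \<forall>e>0.
    \<forall>\<^sub>F (eps, del) in at_right 0 \<times>\<^sub>F at_right 0.
      \<exists>A \<in> sets M. measure M A \<le> e \<and>
        {w \<in> space M.
          \<not> (let t0 = t0_time a1 a2 c1 c2 HO H0;
                 Hh = Hhat a1 a2 HO c1 c2 c3 eps del (\<lambda>k. eta k w) (\<lambda>k. xi k w)
                        (\<lambda>k. zeta k w) q0 p0 t;
                 ed = edge_at a1 a2 HO c1 c2 c3 eps del (\<lambda>k. eta k w) (\<lambda>k. xi k w)
                        (\<lambda>k. zeta k w) q0 p0 t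
             in (t < t0 \<longrightarrow> ed = 3 \<and> \<bar>Hh - Hlim3 a1 a2 c1 c2 H0 t\<bar> \<le> \<kappa>) \<and>
                (t = t0 \<longrightarrow> \<bar>Hh - HO\<bar> \<le> \<kappa>) \<and>
                (t0 < t \<longrightarrow> (ed = 1 \<and> \<bar>Hh - Hlim1 a1 c1 c3 HO t0 t\<bar> \<le> \<kappa>) \<or>
                            (ed = 2 \<and> \<bar>Hh - Hlim2 a2 c2 c3 HO t0 t\<bar> \<le> \<kappa>)))}
        \<subseteq> A)"
  unfolding near_limit_motion_def[symmetric]
proof (intro allI impI)
  fix t kap e :: real
  assume t: "0 < t \<and> t < T" and kap: "kap > 0" and e: "e > 0"
  interpret billiard_params a1 a2 HO c1 c2 c3 beta p0
    by unfold_locales (use assms(2-9,22,23) in auto)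
  have between: "\<And>x. alpha < x \<and> x < beta \<Longrightarrow> x \<in> {0..beta}" using assms(8) by auto
  have "AE w in M. \<forall>k. alpha < eta k w \<and> eta k w < beta"
    "AE w in M. \<forall>k. alpha < xi k w \<and> xi k w < beta"
    "AE w in M. \<forall>k. alpha < zeta k w \<and> zeta k w < beta"
    using assms(17-19) by (auto intro: prob_space.AE_all_of_prob_1[OF assms(1)])
  then have noise:
    "AE w in M. \<forall>k. eta k w \<in> {0..beta} \<and> xi k w \<in> {0..beta} \<and> zeta k w \<in> {0..beta}"
    by eventually_elim (blast intro: between)
  have "\<forall>\<^sub>F (eps, del) in at_right 0 \<times>\<^sub>F at_right 0.
      \<forall>w. (\<forall>k. eta k w \<in> {0..beta} \<and> xi k w \<in> {0..beta} \<and> zeta k w \<in> {0..beta}) \<longrightarrow>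
        near_limit_motion a1 a2 HO H0 c1 c2 c3 eps del (\<lambda>k. eta k w) (\<lambda>k. xi k w) (\<lambda>k. zeta k w)
          q0 p0 t kap"
    using eventually_near_limit_motion[OF assms(20,21) conjunct1[OF t] conjunct2[OF t] kap]
    unfolding assms(22) by (rule eventually_mono) (simp add: case_prod_beta)
  from eventually_exceptional_set_small[OF noise this] e
  show "\<forall>\<^sub>F (eps, del) in at_right 0 \<times>\<^sub>F at_right 0. \<exists>A \<in> sets M. measure M A \<le> e \<and>
      {w \<in> space M. \<not> near_limit_motion a1 a2 HO H0 c1 c2 c3 eps del (\<lambda>k. eta k w)
          (\<lambda>k. xi k w) (\<lambda>k. zeta k w) q0 p0 t kap} \<subseteq> A"
    by simp
qed

end
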